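(* Let $g:\mathbb{R}^n\to\mathbb{R}\cup\{+\infty\}$ be a proper closed convex function and let $f=f_1-f_2$, where $f_1,f_2:\mathbb{R}^n\to\mathbb{R}$ are convex differentiable functions such that $\nabla f_1$ is Lipschitz continuous with modulus $L>0$, $\nabla f_2$ is Lipschitz continuous with modulus $l\ge 0$, and $L\ge l$. Let $F=f+g$, and assume $\inf F>-\infty$ and that this infimum is attained. Let $\{x^k\}$ be generated by Algorithm 1 (described in the context) and suppose $\bar\beta:=\sup_k\beta_k<\sqrt{L/(L+l)}$. Then: (i) $\sum_{k=0}^\infty\|x^{k+1}-x^k\|^2<\infty$; (ii) any accumulation point of $\{x^k\}$ is a stationary point of $F$, i.e., a point $\bar x$ with $0\in\nabla f(\bar x)+\partial g(\bar x)$.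
   Context: $\partial g$ denotes the convex subdifferential. For a proper closed convex $h$, $\mathrm{Prox}_h(v)=\arg\min_{x\in\mathbb{R}^n}\{h(x)+\tfrac12\|x-v\|^2\}$. Algorithm 1 (proximal gradient algorithm with extrapolation): choose $x^0\in\operatorname{dom} g$ and $\{\beta_k\}\subseteq[0,\sqrt{L/(L+l)}]$, set $x^{-1}=x^0$, and for $k=0,1,2,\dots$ set $y^k=x^k+\beta_k(x^k-x^{k-1})$ and $x^{k+1}=\mathrm{Prox}_{\frac1L g}\big(y^k-\tfrac1L\nabla f(y^k)\big)$. *)

theory Defs
  imports "HOL-Analysis.Analysis" "HOL-Library.Extended_Real"
begin

definition proper_fun :: "('a \<Rightarrow> ereal) \<Rightarrow> bool" where
  "proper_fun g \<longleftrightarrow> (\<forall>x. g x \<noteq> -\<infinity>) \<and> (\<exists>x. g x \<noteq> \<infinity>)"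

definition closed_fun :: "('a::topological_space \<Rightarrow> ereal) \<Rightarrow> bool" where
  "closed_fun g \<longleftrightarrow> closed {(x, t::real). g x \<le> ereal t}"

definition convex_fun :: "('a::real_vector \<Rightarrow> ereal) \<Rightarrow> bool" where
  "convex_fun g \<longleftrightarrow> convex {(x, t::real). g x \<le> ereal t}"

definition subdiff :: "('a::real_inner \<Rightarrow> ereal) \<Rightarrow> 'a \<Rightarrow> 'a set" where
  "subdiff g x = {v. g x \<noteq> \<infinity> \<and> (\<forall>y. g y \<ge> g x + ereal (v \<bullet> (y - x)))}"

definition Prox :: "('a::real_normed_vector \<Rightarrow> ereal) \<Rightarrow> 'a \<Rightarrow> 'a" where
  "Prox h v = (THE x. \<forall>z. h x + ereal ((norm (x - v))\<^sup>2 / 2) \<le> h z + ereal ((norm (z - v))\<^sup>2 / 2))"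

end

theory Submission
  imports Defs
begin

text \<open>
  With step size 1/L, one proximal gradient step decreases F up to the extrapolation error,
  F(x(k+1)) \<le> F(x k) + (L+l)/2 \<parallel>x k - y k\<parallel>^2 - L/2 \<parallel>x k - x(k+1)\<parallel>^2,
  by the descent lemma for f1, the gradient inequality for the convex f2 and the variational
  inequality characterising the proximal point. As \<parallel>x k - y k\<parallel> = \<beta> k \<parallel>x k - x(k-1)\<parallel>, the energy
  F(x k) + L/2 \<parallel>x k - x(k-1)\<parallel>^2 drops by at least (L - (L+l) (sup \<beta>)^2)/2 \<parallel>x k - x(k-1)\<parallel>^2
  in each step; it is bounded below by min F, so the squared steps are summable. Along a
  subsequence converging to a point p the steps vanish, so the corresponding y k and x(k+1)
  converge to p as well, and passing to the limit in the variational inequality (the gradients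
  are continuous, g is lower semicontinuous) gives -\<nabla>f(p) \<in> \<partial>g(p).

  The proximal point itself exists because g + L/2 \<parallel>-\<parallel>^2 has an affine minorant (again by the
  descent lemma and min F), which makes the proximal objective coercive.
\<close>

section \<open>Differentiable functions with Lipschitz gradient\<close>

lemma has_real_derivative_along_line:
  fixes h :: "'a::real_inner \<Rightarrow> real"
  assumes "\<And>z. (h has_derivative (\<lambda>k. Dh z \<bullet> k)) (at z)"
  shows "((\<lambda>t. h (v + t *\<^sub>R w)) has_real_derivative (Dh (v + t *\<^sub>R w) \<bullet> w)) (at t)"
proof -
  have "((\<lambda>t. v + t *\<^sub>R w) has_derivative (\<lambda>s. s *\<^sub>R w)) (at t)"
    by (auto intro!: derivative_eq_intros)
  from has_derivative_compose[OF this assms]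
  show ?thesis
    by (simp add: o_def has_derivative_imp_has_field_derivative)
qed

lemma lipschitz_gradient_upper_bound:
  fixes h :: "'a::real_inner \<Rightarrow> real"
  assumes deriv: "\<And>z. (h has_derivative (\<lambda>k. Dh z \<bullet> k)) (at z)"
    and lip: "\<And>u v. norm (Dh u - Dh v) \<le> M * norm (u - v)"
  shows "h z \<le> h v + Dh v \<bullet> (z - v) + M / 2 * (norm (z - v))\<^sup>2"
proof -
  define w where "w = z - v"
  define q where "q t = h (v + t *\<^sub>R w) - t * (Dh v \<bullet> w) - M / 2 * t\<^sup>2 * (norm w)\<^sup>2" for t
  have "q 1 \<le> q 0"
  proof (rule DERIV_nonpos_imp_nonincreasing[where f = q])
    fix t :: real
    assume t: "0 \<le> t" "t \<le> 1"
    have q': "(q has_real_derivative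
        (Dh (v + t *\<^sub>R w) - Dh v) \<bullet> w - M * t * (norm w)\<^sup>2) (at t)"
      unfolding q_def
      by (auto intro!: derivative_eq_intros has_real_derivative_along_line[OF deriv]
          simp: inner_diff_left)
    have "(Dh (v + t *\<^sub>R w) - Dh v) \<bullet> w \<le> norm (Dh (v + t *\<^sub>R w) - Dh v) * norm w"
      by (rule norm_cauchy_schwarz)
    also have "\<dots> \<le> M * norm (t *\<^sub>R w) * norm w"
      using lip[of "v + t *\<^sub>R w" v] by (simp add: mult_right_mono)
    also have "\<dots> = M * t * (norm w)\<^sup>2"
      using t by (simp add: power2_eq_square)
    finally show "\<exists>d. (q has_real_derivative d) (at t) \<and> d \<le> 0"
      using q' by force
  qed simp
  then show ?thesis
    by (simp add: q_def w_def)
qed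

lemma convex_gradient_lower_bound:
  fixes h :: "'a::real_inner \<Rightarrow> real"
  assumes conv: "convex_on UNIV h"
    and deriv: "\<And>z. (h has_derivative (\<lambda>k. Dh z \<bullet> k)) (at z)"
  shows "h v + Dh v \<bullet> (z - v) \<le> h z"
proof -
  define q where "q t = h (v + t *\<^sub>R (z - v))" for t
  have "convex_on UNIV q"
    unfolding q_def
  proof (rule convex_onI[OF _ convex_UNIV])
    fix t a b :: real
    have "v + ((1 - t) * a + t * b) *\<^sub>R (z - v)
        = (1 - t) *\<^sub>R (v + a *\<^sub>R (z - v)) + t *\<^sub>R (v + b *\<^sub>R (z - v))"
      by (simp add: algebra_simps)
    moreover assume "0 < t" "t < 1"
    ultimately show "h (v + ((1 - t) *\<^sub>R a + t *\<^sub>R b) *\<^sub>R (z - v))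
        \<le> (1 - t) * h (v + a *\<^sub>R (z - v)) + t * h (v + b *\<^sub>R (z - v))"
      using convex_onD[OF conv, of t] by simp
  qed
  moreover have "(q has_real_derivative (Dh v \<bullet> (z - v))) (at 0)"
    unfolding q_def using has_real_derivative_along_line[OF deriv, of v "z - v" 0] by simp
  ultimately have "(Dh v \<bullet> (z - v)) * (1 - 0) \<le> q 1 - q 0"
    by (intro convex_on_imp_above_tangent) auto
  then show ?thesis
    by (simp add: q_def)
qed

lemma lipschitz_tendsto:
  fixes h :: "'a::real_normed_vector \<Rightarrow> 'b::real_normed_vector"
  assumes lip: "\<And>u v. norm (h u - h v) \<le> M * norm (u - v)" and "(f \<longlongrightarrow> a) F"
  shows "((\<lambda>j. h (f j)) \<longlongrightarrow> h a) F"
proof -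
  have "((\<lambda>j. M * norm (f j - a)) \<longlongrightarrow> 0) F"
    using assms(2) by (intro tendsto_mult_right_zero tendsto_norm_zero) (rule LIM_zero)
  then have "((\<lambda>j. h (f j) - h a) \<longlongrightarrow> 0) F"
    by (rule Lim_null_comparison[OF always_eventually, rotated]) (simp add: lip)
  then show ?thesis
    by (rule LIM_zero_cancel)
qed

section \<open>Closed proper convex functions and the proximal mapping\<close>

definition edom :: "('a \<Rightarrow> ereal) \<Rightarrow> 'a set" where
  "edom g = {x. g x \<noteq> \<infinity>}"

lemma proper_fun_finite_on_edom:
  "proper_fun g \<Longrightarrow> x \<in> edom g \<Longrightarrow> g x = ereal (real_of_ereal (g x))"
  by (cases "g x") (auto simp: proper_fun_def edom_def)

lemma convex_fun_combination:
  assumes "convex_fun g" "proper_fun g" "z \<in> edom g" "w \<in> edom g" "0 \<le> t" "t \<le> 1"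
  shows "g ((1 - t) *\<^sub>R z + t *\<^sub>R w)
           \<le> ereal ((1 - t) * real_of_ereal (g z) + t * real_of_ereal (g w))"
proof -
  let ?epi = "{(x, s::real). g x \<le> ereal s}"
  have "(z, real_of_ereal (g z)) \<in> ?epi" "(w, real_of_ereal (g w)) \<in> ?epi"
    using proper_fun_finite_on_edom[OF assms(2)] assms(3,4) by (metis case_prodI mem_Collect_eq order_refl)+
  with assms(1,5,6) have "(1 - t) *\<^sub>R (z, real_of_ereal (g z)) + t *\<^sub>R (w, real_of_ereal (g w)) \<in> ?epi"
    unfolding convex_fun_def by (intro convexD) auto
  then show ?thesis
    by simp
qed

lemma closed_fun_limit:
  assumes "closed_fun g" "z \<longlonglongrightarrow> z0" "T \<longlonglongrightarrow> T0" "\<And>k. g (z k) \<le> ereal (T k)"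
  shows "g z0 \<le> ereal T0"
proof -
  have "closed {(x, s::real). g x \<le> ereal s}"
    using assms(1) by (simp add: closed_fun_def)
  then have "(z0, T0) \<in> {(x, s::real). g x \<le> ereal s}"
    by (rule closed_sequentially[of _ "\<lambda>k. (z k, T k)"]) (use assms in \<open>auto intro: tendsto_Pair\<close>)
  then show ?thesis
    by simp
qed

lemma norm_convex_combination_square:
  fixes a b :: "'a::real_inner"
  shows "(norm ((1 - t) *\<^sub>R a + t *\<^sub>R b))\<^sup>2
           = (1 - t) * (norm a)\<^sup>2 + t * (norm b)\<^sup>2 - t * (1 - t) * (norm (a - b))\<^sup>2"
  unfolding power2_norm_eq_inner
  by (simp add: inner_add_left inner_add_right inner_diff_left inner_diff_right inner_commute
      algebra_simps)

lemma strongly_convex_minimizer_growth: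
  fixes \<phi> :: "'a::real_normed_vector \<Rightarrow> real"
  assumes strong: "\<And>t. 0 < t \<Longrightarrow> t < 1 \<Longrightarrow> (1 - t) *\<^sub>R q + t *\<^sub>R z \<in> D \<and>
             \<phi> ((1 - t) *\<^sub>R q + t *\<^sub>R z) \<le> (1 - t) * \<phi> q + t * \<phi> z - t * (1 - t) * \<mu> / 2 * (norm (q - z))\<^sup>2"
    and min: "\<And>w. w \<in> D \<Longrightarrow> \<phi> q \<le> \<phi> w"
  shows "\<phi> q + \<mu> / 2 * (norm (z - q))\<^sup>2 \<le> \<phi> z"
proof -
  define t :: "nat \<Rightarrow> real" where "t n = 1 / real (n + 2)" for n
  have bound: "\<phi> q + (1 - t n) * (\<mu> / 2 * (norm (z - q))\<^sup>2) \<le> \<phi> z" for n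
  proof -
    have t: "0 < t n" "t n < 1"
      by (auto simp: t_def)
    with strong min have "\<phi> q \<le> (1 - t n) * \<phi> q + t n * \<phi> z - t n * (1 - t n) * \<mu> / 2 * (norm (q - z))\<^sup>2"
      by (meson order_trans)
    then have "t n * (\<phi> q + (1 - t n) * (\<mu> / 2 * (norm (z - q))\<^sup>2)) \<le> t n * \<phi> z"
      by (simp add: norm_minus_commute algebra_simps)
    with t show ?thesis
      by simp
  qed
  have "(\<lambda>n. \<phi> q + (1 - t n) * (\<mu> / 2 * (norm (z - q))\<^sup>2)) \<longlonglongrightarrow> \<phi> q + (1 - 0) * (\<mu> / 2 * (norm (z - q))\<^sup>2)"
    unfolding t_def by (intro tendsto_intros LIMSEQ_ignore_initial_segment[OF lim_1_over_n])
  with bound show ?thesis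
    by (intro LIMSEQ_le_const2) auto
qed

locale closed_convex_fun =
  fixes g :: "'a::euclidean_space \<Rightarrow> ereal"
  assumes proper: "proper_fun g" and closed: "closed_fun g" and convex: "convex_fun g"

locale prox_setting = closed_convex_fun g for g +
  fixes L :: real
  assumes L_pos: "L > 0"
    and minorant: "\<exists>c a. \<forall>z\<in>edom g. c + a \<bullet> z - L / 2 * (norm z)\<^sup>2 \<le> real_of_ereal (g z)"
begin

abbreviation prox :: "'a \<Rightarrow> 'a" where
  "prox v \<equiv> Prox (\<lambda>z. ereal (1 / L) * g z) v"

text \<open>
  It agrees with
  the extended-real objective only on edom g (outside, real_of_ereal \<infinity> = 0), so every statement
  about it is restricted to edom g.
\<close>

definition prox_objective :: "'a \<Rightarrow> 'a \<Rightarrow> real" where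
  "prox_objective v z = real_of_ereal (g z) / L + (norm (z - v))\<^sup>2 / 2"

lemma prox_objective_strongly_convex:
  assumes "z \<in> edom g" "w \<in> edom g" "0 \<le> t" "t \<le> 1"
  shows "(1 - t) *\<^sub>R z + t *\<^sub>R w \<in> edom g \<and>
    prox_objective v ((1 - t) *\<^sub>R z + t *\<^sub>R w)
      \<le> (1 - t) * prox_objective v z + t * prox_objective v w - t * (1 - t) / 2 * (norm (z - w))\<^sup>2"
proof
  define G where "G x = real_of_ereal (g x) / L" for x
  have g_comb: "g ((1 - t) *\<^sub>R z + t *\<^sub>R w) \<le> ereal ((1 - t) * real_of_ereal (g z) + t * real_of_ereal (g w))"
    using convex_fun_combination[OF convex proper assms] .
  then show comb_edom: "(1 - t) *\<^sub>R z + t *\<^sub>R w \<in> edom g"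
    by (auto simp: edom_def)
  have "real_of_ereal (g ((1 - t) *\<^sub>R z + t *\<^sub>R w)) \<le> (1 - t) * real_of_ereal (g z) + t * real_of_ereal (g w)"
    using g_comb proper_fun_finite_on_edom[OF proper comb_edom] by (metis ereal_less_eq(3))
  then have G_comb: "G ((1 - t) *\<^sub>R z + t *\<^sub>R w) \<le> (1 - t) * G z + t * G w"
    using L_pos unfolding G_def by (metis add_divide_distrib divide_right_mono less_imp_le times_divide_eq_right)
  have "(1 - t) *\<^sub>R z + t *\<^sub>R w - v = (1 - t) *\<^sub>R (z - v) + t *\<^sub>R (w - v)"
    by (simp add: algebra_simps)
  then have norm_comb: "(norm ((1 - t) *\<^sub>R z + t *\<^sub>R w - v))\<^sup>2
      = (1 - t) * (norm (z - v))\<^sup>2 + t * (norm (w - v))\<^sup>2 - t * (1 - t) * (norm (z - w))\<^sup>2"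
    by (simp add: norm_convex_combination_square)
  have "prox_objective v ((1 - t) *\<^sub>R z + t *\<^sub>R w)
      \<le> (1 - t) * G z + t * G w
         + ((1 - t) * (norm (z - v))\<^sup>2 + t * (norm (w - v))\<^sup>2 - t * (1 - t) * (norm (z - w))\<^sup>2) / 2"
    unfolding prox_objective_def G_def[symmetric] norm_comb using G_comb by linarith
  also have "\<dots> = (1 - t) * prox_objective v z + t * prox_objective v w - t * (1 - t) / 2 * (norm (z - w))\<^sup>2"
    unfolding prox_objective_def G_def by (simp add: field_simps)
  finally show "prox_objective v ((1 - t) *\<^sub>R z + t *\<^sub>R w)
      \<le> (1 - t) * prox_objective v z + t * prox_objective v w - t * (1 - t) / 2 * (norm (z - w))\<^sup>2" .
qed

lemma prox_objective_minimizer_growth: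
  assumes "q \<in> edom g" "\<And>w. w \<in> edom g \<Longrightarrow> prox_objective v q \<le> prox_objective v w" "z \<in> edom g"
  shows "prox_objective v q + (norm (z - q))\<^sup>2 / 2 \<le> prox_objective v z"
  using strongly_convex_minimizer_growth[of q z "edom g" "prox_objective v" 1]
    prox_objective_strongly_convex[OF assms(1,3)] assms(2) by simp

lemma prox_objective_affine_minorant:
  obtains c a where "\<And>z. z \<in> edom g \<Longrightarrow> c + a \<bullet> z \<le> prox_objective v z"
proof -
  obtain c a where c_a: "\<And>z. z \<in> edom g \<Longrightarrow> c + a \<bullet> z - L / 2 * (norm z)\<^sup>2 \<le> real_of_ereal (g z)"
    using minorant by blast
  show thesis
  proof
    fix z
    assume "z \<in> edom g"
    have "(norm (z - v))\<^sup>2 = (norm z)\<^sup>2 - 2 * (v \<bullet> z) + (norm v)\<^sup>2"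
      by (simp add: power2_norm_eq_inner inner_diff_left inner_diff_right inner_commute)
    moreover have "(c + a \<bullet> z - L / 2 * (norm z)\<^sup>2) / L \<le> real_of_ereal (g z) / L"
      using c_a[OF \<open>z \<in> edom g\<close>] L_pos by (simp add: divide_right_mono)
    ultimately show "c / L + (norm v)\<^sup>2 / 2 + ((1 / L) *\<^sub>R a - v) \<bullet> z \<le> prox_objective v z"
      using L_pos unfolding prox_objective_def by (simp add: inner_diff_left diff_divide_distrib add_divide_distrib)
  qed
qed

lemma prox_objective_coercive:
  assumes "z0 \<in> edom g"
  obtains C where "\<And>z. z \<in> edom g \<Longrightarrow> (norm (z - z0))\<^sup>2 / 8 - C \<le> prox_objective v z"
proof -
  let ?\<phi> = "prox_objective v"
  obtain c a where affine: "\<And>z. z \<in> edom g \<Longrightarrow> c + a \<bullet> z \<le> ?\<phi> z"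
    using prox_objective_affine_minorant[of v] by blast
  show thesis
  proof (rule that[of "?\<phi> z0 - 2 * c - 2 * (a \<bullet> z0) + 2 * (norm a)\<^sup>2"])
    fix z
    assume z: "z \<in> edom g"
    define r where "r = norm (z - z0)"
    \<comment> \<open>strong convexity at the midpoint upgrades the affine minorant to quadratic growth\<close>
    define m where "m = (1 - 1 / 2) *\<^sub>R z0 + (1 / 2) *\<^sub>R z"
    have "m \<in> edom g" and m_le: "?\<phi> m \<le> ?\<phi> z0 / 2 + ?\<phi> z / 2 - r\<^sup>2 / 8"
      using prox_objective_strongly_convex[OF assms z, of "1 / 2" v]
      by (simp_all add: m_def r_def norm_minus_commute)
    moreover have "a \<bullet> m = a \<bullet> z0 + (a \<bullet> (z - z0)) / 2"
      by (simp add: m_def inner_diff_right inner_add_right field_simps)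
    ultimately have "c + a \<bullet> z0 + (a \<bullet> (z - z0)) / 2 \<le> ?\<phi> z0 / 2 + ?\<phi> z / 2 - r\<^sup>2 / 8"
      using affine[of m] by linarith
    moreover have "- (norm a * r) \<le> a \<bullet> (z - z0)"
      using norm_cauchy_schwarz[of "- a" "z - z0"] by (simp add: r_def)
    moreover have "norm a * r \<le> r\<^sup>2 / 8 + 2 * (norm a)\<^sup>2"
      using sum_power2_ge_zero[of "r - 4 * norm a" 0] by (simp add: power2_eq_square algebra_simps)
    ultimately show "(norm (z - z0))\<^sup>2 / 8 - (?\<phi> z0 - 2 * c - 2 * (a \<bullet> z0) + 2 * (norm a)\<^sup>2) \<le> ?\<phi> z"
      unfolding r_def[symmetric] by linarith
  qed
qed

lemma prox_objective_lower_semicontinuous: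
  assumes "\<And>j. z j \<in> edom g" "z \<longlonglongrightarrow> q" "(\<lambda>j. prox_objective v (z j)) \<longlonglongrightarrow> m"
  shows "q \<in> edom g \<and> prox_objective v q \<le> m"
proof -
  have "(\<lambda>j. L * (prox_objective v (z j) - (norm (z j - v))\<^sup>2 / 2)) \<longlonglongrightarrow> L * (m - (norm (q - v))\<^sup>2 / 2)"
    using assms(2,3) by (auto intro!: tendsto_eq_intros)
  moreover have "g (z j) \<le> ereal (L * (prox_objective v (z j) - (norm (z j - v))\<^sup>2 / 2))" for j
    using proper_fun_finite_on_edom[OF proper assms(1)] L_pos by (simp add: prox_objective_def)
  ultimately have g_q: "g q \<le> ereal (L * (m - (norm (q - v))\<^sup>2 / 2))"
    by (rule closed_fun_limit[OF closed assms(2)])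
  then have "q \<in> edom g"
    by (auto simp: edom_def)
  with g_q have "real_of_ereal (g q) \<le> L * (m - (norm (q - v))\<^sup>2 / 2)"
    using proper_fun_finite_on_edom[OF proper] by (metis ereal_less_eq(3))
  with \<open>q \<in> edom g\<close> show ?thesis
    using L_pos by (simp add: prox_objective_def field_simps)
qed

lemma prox_objective_has_minimizer:
  obtains q where "q \<in> edom g" "\<And>z. z \<in> edom g \<Longrightarrow> prox_objective v q \<le> prox_objective v z"
proof -
  let ?\<phi> = "prox_objective v"
  obtain z0 where z0: "z0 \<in> edom g"
    using proper by (auto simp: proper_fun_def edom_def)
  obtain C where coercive: "\<And>z. z \<in> edom g \<Longrightarrow> (norm (z - z0))\<^sup>2 / 8 - C \<le> ?\<phi> z"
    using prox_objective_coercive[OF z0, of v] by blast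
  define m where "m = Inf (?\<phi> ` edom g)"
  have "bdd_below (?\<phi> ` edom g)"
    using coercive by (intro bdd_belowI[of _ "- C"]) (smt (verit) image_iff zero_le_power2 divide_nonneg_pos)
  then have m_le: "\<And>z. z \<in> edom g \<Longrightarrow> m \<le> ?\<phi> z"
    unfolding m_def by (auto intro: cInf_lower)
  have "\<exists>z. z \<in> edom g \<and> ?\<phi> z < m + 1 / real (Suc k)" for k
    using cInf_lessD[of "?\<phi> ` edom g" "m + 1 / real (Suc k)"] z0 unfolding m_def by auto
  then obtain zs where zs: "\<And>k. zs k \<in> edom g" "\<And>k. ?\<phi> (zs k) < m + 1 / real (Suc k)"
    by metis
  have "zs k \<in> cball z0 (sqrt (8 * (?\<phi> z0 + 1 + C)))" for k
  proof -
    have "1 / real (Suc k) \<le> 1"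
      by simp
    then have "?\<phi> (zs k) \<le> ?\<phi> z0 + 1"
      using zs(2)[of k] m_le[OF z0] by linarith
    then have "(norm (z0 - zs k))\<^sup>2 \<le> 8 * (?\<phi> z0 + 1 + C)"
      using coercive[OF zs(1), of k] by (simp add: norm_minus_commute)
    then show ?thesis
      by (simp add: dist_norm real_le_rsqrt)
  qed
  then have "bounded (range zs)"
    by (intro bounded_subset[OF bounded_cball]) blast
  then obtain q \<sigma> where \<sigma>: "strict_mono \<sigma>" and zs_lim: "(\<lambda>j. zs (\<sigma> j)) \<longlonglongrightarrow> q"
    using bounded_imp_convergent_subsequence unfolding o_def by blast
  have "(\<lambda>j. ?\<phi> (zs (\<sigma> j))) \<longlonglongrightarrow> m"
  proof (rule tendsto_sandwich[OF always_eventually always_eventually])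
    show "\<forall>j. m \<le> ?\<phi> (zs (\<sigma> j))"
      using m_le zs(1) by blast
    show "\<forall>j. ?\<phi> (zs (\<sigma> j)) \<le> m + 1 / real (Suc (\<sigma> j))"
      using zs(2) less_imp_le by blast
    have "(\<lambda>j. 1 / real (Suc (\<sigma> j))) \<longlonglongrightarrow> 0"
      using LIMSEQ_subseq_LIMSEQ[OF LIMSEQ_Suc[OF lim_1_over_n] \<sigma>] by (simp add: o_def)
    then show "(\<lambda>j. m + 1 / real (Suc (\<sigma> j))) \<longlonglongrightarrow> m"
      using tendsto_add[OF tendsto_const, of _ 0 _ m] by simp
  qed simp
  then have "q \<in> edom g \<and> ?\<phi> q \<le> m"
    using zs(1) zs_lim by (intro prox_objective_lower_semicontinuous)
  with m_le show thesis
    by (meson order_trans that)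
qed

lemma prox_minimizes_prox_objective:
  shows "prox v \<in> edom g" and "\<And>z. z \<in> edom g \<Longrightarrow> prox_objective v (prox v) \<le> prox_objective v z"
proof -
  let ?\<phi> = "prox_objective v"
  define P where "P q \<longleftrightarrow> (\<forall>z. ereal (1 / L) * g q + ereal ((norm (q - v))\<^sup>2 / 2)
                           \<le> ereal (1 / L) * g z + ereal ((norm (z - v))\<^sup>2 / 2))" for q
  have scaled: "ereal (1 / L) * g z + ereal ((norm (z - v))\<^sup>2 / 2)
      = (if z \<in> edom g then ereal (?\<phi> z) else \<infinity>)" for z
  proof (cases "z \<in> edom g")
    case True
    then obtain r where "g z = ereal r"
      using proper_fun_finite_on_edom[OF proper] by blast
    with True show ?thesis
      by (simp add: prox_objective_def)
  next
    case False
    then show ?thesis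
      using L_pos by (simp add: edom_def)
  qed
  obtain q where q: "q \<in> edom g" "\<And>z. z \<in> edom g \<Longrightarrow> ?\<phi> q \<le> ?\<phi> z"
    using prox_objective_has_minimizer[of v] by blast
  have P_iff: "P p \<longleftrightarrow> p \<in> edom g \<and> (\<forall>z\<in>edom g. ?\<phi> p \<le> ?\<phi> z)" for p
    using q(1) by (auto simp: P_def scaled)
  have "\<exists>!p. P p"
  proof (rule ex1I[of P q])
    show "P q"
      using q by (simp add: P_iff)
    fix p
    assume "P p"
    then have p: "p \<in> edom g" "\<And>z. z \<in> edom g \<Longrightarrow> ?\<phi> p \<le> ?\<phi> z"
      by (auto simp: P_iff)
    have "?\<phi> p + (norm (q - p))\<^sup>2 / 2 \<le> ?\<phi> q" "?\<phi> q \<le> ?\<phi> p"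
      using prox_objective_minimizer_growth[OF p q(1)] q(2)[OF p(1)] by auto
    then have "(norm (q - p))\<^sup>2 \<le> 0"
      by linarith
    then show "p = q"
      by simp
  qed
  then have "P (prox v)"
    unfolding Prox_def P_def by (rule theI')
  then show "prox v \<in> edom g" "\<And>z. z \<in> edom g \<Longrightarrow> ?\<phi> (prox v) \<le> ?\<phi> z"
    by (auto simp: P_iff)
qed

lemma prox_variational_inequality:
  assumes "z \<in> edom g"
  shows "real_of_ereal (g (prox v)) + L * ((v - prox v) \<bullet> (z - prox v)) \<le> real_of_ereal (g z)"
proof -
  let ?p = "prox v"
  have "prox_objective v ?p + (norm (z - ?p))\<^sup>2 / 2 \<le> prox_objective v z"
    by (rule prox_objective_minimizer_growth[OF prox_minimizes_prox_objective assms])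
  moreover have "2 * ((v - ?p) \<bullet> (z - ?p)) = (norm (?p - v))\<^sup>2 + (norm (z - ?p))\<^sup>2 - (norm (z - v))\<^sup>2"
    using dot_norm_neg[of "v - ?p" "z - ?p"] by (simp add: norm_minus_commute)
  ultimately have "real_of_ereal (g ?p) / L + (v - ?p) \<bullet> (z - ?p) \<le> real_of_ereal (g z) / L"
    unfolding prox_objective_def by linarith
  then have "L * (real_of_ereal (g ?p) / L + (v - ?p) \<bullet> (z - ?p)) \<le> L * (real_of_ereal (g z) / L)"
    using L_pos by (intro mult_left_mono) auto
  then show ?thesis
    using L_pos by (simp add: distrib_left)
qed

end

section \<open>The proximal gradient step for a difference of convex functions\<close>

locale dc_composite = closed_convex_fun g for g :: "'a::euclidean_space \<Rightarrow> ereal" +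
  fixes f1 f2 :: "'a \<Rightarrow> real" and Df1 Df2 :: "'a \<Rightarrow> 'a" and L l :: real
  assumes f1_convex: "convex_on UNIV f1"
    and f1_deriv: "\<And>z. (f1 has_derivative (\<lambda>h. Df1 z \<bullet> h)) (at z)"
    and f2_convex: "convex_on UNIV f2"
    and f2_deriv: "\<And>z. (f2 has_derivative (\<lambda>h. Df2 z \<bullet> h)) (at z)"
    and Df1_lipschitz: "\<And>u v. norm (Df1 u - Df1 v) \<le> L * norm (u - v)"
    and Df2_lipschitz: "\<And>u v. norm (Df2 u - Df2 v) \<le> l * norm (u - v)"
    and L_pos: "L > 0" and l_nonneg: "l \<ge> 0"
    and min_attained: "\<exists>xs. \<forall>z. ereal (f1 xs - f2 xs) + g xs \<le> ereal (f1 z - f2 z) + g z"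
begin

definition objective :: "'a \<Rightarrow> real" where
  "objective z = f1 z - f2 z + real_of_ereal (g z)"

definition prox_grad :: "'a \<Rightarrow> 'a" where
  "prox_grad u = Prox (\<lambda>z. ereal (1 / L) * g z) (u - (1 / L) *\<^sub>R (Df1 u - Df2 u))"

lemma objective_has_minimizer:
  obtains xs where "xs \<in> edom g" "\<And>z. z \<in> edom g \<Longrightarrow> objective xs \<le> objective z"
proof -
  obtain xs where xs: "\<And>z. ereal (f1 xs - f2 xs) + g xs \<le> ereal (f1 z - f2 z) + g z"
    using min_attained by blast
  obtain z0 where "z0 \<in> edom g"
    using proper by (auto simp: proper_fun_def edom_def)
  with xs[of z0] have xs_edom: "xs \<in> edom g"
    by (auto simp: edom_def)
  show thesis
  proof (rule that[OF xs_edom])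
    fix z
    assume "z \<in> edom g"
    with xs[of z] xs_edom show "objective xs \<le> objective z"
      using proper_fun_finite_on_edom[OF proper] unfolding objective_def
      by (metis ereal_less_eq(3) plus_ereal.simps(1))
  qed
qed

sublocale prox_setting g L
proof
  show "L > 0"
    by (rule L_pos)
  obtain xs where xs: "\<And>z. z \<in> edom g \<Longrightarrow> objective xs \<le> objective z"
    using objective_has_minimizer by blast
  have "objective xs - f1 0 + f2 0 + (Df2 0 - Df1 0) \<bullet> z - L / 2 * (norm z)\<^sup>2 \<le> real_of_ereal (g z)"
    if "z \<in> edom g" for z
    using xs[OF that] lipschitz_gradient_upper_bound[OF f1_deriv Df1_lipschitz, of z 0]
      convex_gradient_lower_bound[OF f2_convex f2_deriv, of 0 z]
    unfolding objective_def by (simp add: inner_diff_left)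
  then show "\<exists>c a. \<forall>z\<in>edom g. c + a \<bullet> z - L / 2 * (norm z)\<^sup>2 \<le> real_of_ereal (g z)"
    by blast
qed

lemma prox_grad_in_edom: "prox_grad u \<in> edom g"
  unfolding prox_grad_def by (rule prox_minimizes_prox_objective)

lemma sufficient_decrease:
  assumes "b \<in> edom g"
  shows "objective (prox_grad u) \<le> objective b + (L + l) / 2 * (norm (b - u))\<^sup>2 - L / 2 * (norm (b - prox_grad u))\<^sup>2"
proof -
  define a where "a = prox_grad u"
  have "f1 a \<le> f1 u + Df1 u \<bullet> (a - u) + L / 2 * (norm (a - u))\<^sup>2"
    by (rule lipschitz_gradient_upper_bound[OF f1_deriv Df1_lipschitz])
  moreover have "f1 u + Df1 u \<bullet> (b - u) \<le> f1 b"
    by (rule convex_gradient_lower_bound[OF f1_convex f1_deriv])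
  moreover have "f2 u + Df2 u \<bullet> (a - u) \<le> f2 a"
    by (rule convex_gradient_lower_bound[OF f2_convex f2_deriv])
  moreover have "f2 b \<le> f2 u + Df2 u \<bullet> (b - u) + l / 2 * (norm (b - u))\<^sup>2"
    by (rule lipschitz_gradient_upper_bound[OF f2_deriv Df2_lipschitz])
  moreover have "real_of_ereal (g a) + L * ((u - a) \<bullet> (b - a)) - Df1 u \<bullet> (b - a) + Df2 u \<bullet> (b - a)
      \<le> real_of_ereal (g b)"
    using prox_variational_inequality[OF assms, of "u - (1 / L) *\<^sub>R (Df1 u - Df2 u)"] L_pos
    by (simp add: a_def prox_grad_def inner_diff_left algebra_simps)
  moreover have "L * ((u - a) \<bullet> (b - a)) = L / 2 * (norm (a - u))\<^sup>2 + L / 2 * (norm (b - a))\<^sup>2 - L / 2 * (norm (b - u))\<^sup>2"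
  proof -
    have "2 * ((u - a) \<bullet> (b - a)) = (norm (a - u))\<^sup>2 + (norm (b - a))\<^sup>2 - (norm (b - u))\<^sup>2"
      using dot_norm_neg[of "u - a" "b - a"] by (simp add: norm_minus_commute)
    then have "L / 2 * (2 * ((u - a) \<bullet> (b - a))) = L / 2 * ((norm (a - u))\<^sup>2 + (norm (b - a))\<^sup>2 - (norm (b - u))\<^sup>2)"
      by (rule arg_cong)
    then show ?thesis
      by (simp add: right_diff_distrib distrib_left)
  qed
  moreover have "Df1 u \<bullet> (a - u) - Df1 u \<bullet> (b - u) + Df1 u \<bullet> (b - a) = 0"
    and "Df2 u \<bullet> (a - u) - Df2 u \<bullet> (b - u) + Df2 u \<bullet> (b - a) = 0"
    by (simp_all add: inner_diff_right)
  moreover have "(L + l) / 2 * (norm (b - u))\<^sup>2 = L / 2 * (norm (b - u))\<^sup>2 + l / 2 * (norm (b - u))\<^sup>2"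
    by (simp add: algebra_simps)
  ultimately show ?thesis
    unfolding objective_def a_def[symmetric] by linarith
qed

lemma prox_grad_limit_stationary:
  assumes u_lim: "u \<longlonglongrightarrow> xb" and p_lim: "(\<lambda>j. prox_grad (u j)) \<longlonglongrightarrow> xb"
  shows "Df2 xb - Df1 xb \<in> subdiff g xb"
proof -
  define D where "D = Df1 xb - Df2 xb"
  define w where "w j = u j - (1 / L) *\<^sub>R (Df1 (u j) - Df2 (u j))" for j
  have "w \<longlonglongrightarrow> xb - (1 / L) *\<^sub>R D"
    unfolding w_def D_def
    by (intro tendsto_intros u_lim lipschitz_tendsto[OF Df1_lipschitz] lipschitz_tendsto[OF Df2_lipschitz])
  then have bound_lim: "(\<lambda>j. real_of_ereal (g z) - L * ((w j - prox_grad (u j)) \<bullet> (z - prox_grad (u j))))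
      \<longlonglongrightarrow> real_of_ereal (g z) + D \<bullet> (z - xb)" for z
    using L_pos by (auto intro!: tendsto_eq_intros p_lim)
  have below: "g xb \<le> ereal (real_of_ereal (g z) + D \<bullet> (z - xb))" if "z \<in> edom g" for z
  proof (rule closed_fun_limit[OF closed p_lim bound_lim])
    fix j
    have "real_of_ereal (g (prox_grad (u j))) \<le> real_of_ereal (g z) - L * ((w j - prox_grad (u j)) \<bullet> (z - prox_grad (u j)))"
      using prox_variational_inequality[OF that, of "w j"] unfolding prox_grad_def w_def by simp
    then show "g (prox_grad (u j)) \<le> ereal (real_of_ereal (g z) - L * ((w j - prox_grad (u j)) \<bullet> (z - prox_grad (u j))))"
      using proper_fun_finite_on_edom[OF proper prox_grad_in_edom] by (metis ereal_less_eq(3))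
  qed
  obtain z0 where "z0 \<in> edom g"
    using proper by (auto simp: proper_fun_def edom_def)
  with below have xb_edom: "xb \<in> edom g"
    by (auto simp: edom_def)
  show ?thesis
    unfolding subdiff_def
  proof (intro CollectI conjI allI)
    show "g xb \<noteq> \<infinity>"
      using xb_edom by (simp add: edom_def)
    fix z
    show "g xb + ereal ((Df2 xb - Df1 xb) \<bullet> (z - xb)) \<le> g z"
    proof (cases "z \<in> edom g")
      case True
      obtain r s where "g z = ereal r" "g xb = ereal s"
        using proper_fun_finite_on_edom[OF proper] True xb_edom by blast
      moreover have "Df2 xb - Df1 xb = - D"
        by (simp add: D_def)
      ultimately show ?thesis
        using below[OF True] by (simp add: inner_minus_left)
    next
      case False
      then show ?thesis
        by (simp add: edom_def)
    qed
  qed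
qed

end

section \<open>The proximal gradient algorithm with extrapolation\<close>

lemma summable_of_energy_decrease:
  fixes E a :: "nat \<Rightarrow> real"
  assumes decrease: "\<And>k. E (Suc k) \<le> E k - c * a k"
    and lower: "\<And>k. m \<le> E k" and "c > 0" and "\<And>k. 0 \<le> a k"
  shows "summable a"
proof (rule bounded_imp_summable)
  fix n
  have "c * (\<Sum>k\<le>n. a k) \<le> E 0 - E (Suc n)"
  proof (induction n)
    case 0
    then show ?case using decrease[of 0] by simp
  next
    case (Suc n)
    then show ?case using decrease[of "Suc n"] by (simp add: distrib_left)
  qed
  then show "(\<Sum>k\<le>n. a k) \<le> (E 0 - m) / c"
    using lower[of "Suc n"] \<open>c > 0\<close> by (simp add: pos_le_divide_eq mult.commute)
qed (use assms in auto)

text \<open>Truncated subtraction gives x (0 - 1) = x 0, which encodes the initialisation x(-1) = x(0).\<close>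

locale inertial_prox_grad = dc_composite g f1 f2 Df1 Df2 L l
  for g :: "'a::euclidean_space \<Rightarrow> ereal" and f1 f2 Df1 Df2 L l +
  fixes \<beta> :: "nat \<Rightarrow> real" and \<beta>_max :: real and x y :: "nat \<Rightarrow> 'a"
  assumes x0: "x 0 \<in> edom g"
    and beta_bounds: "\<And>k. 0 \<le> \<beta> k \<and> \<beta> k \<le> \<beta>_max"
    and beta_max_less: "\<beta>_max < sqrt (L / (L + l))"
    and y_def: "\<And>k. y k = x k + \<beta> k *\<^sub>R (x k - x (k - 1))"
    and x_step: "\<And>k. x (Suc k) = prox_grad (y k)"
begin

definition energy :: "nat \<Rightarrow> real" where
  "energy k = objective (x k) + L / 2 * (norm (x k - x (k - 1)))\<^sup>2"

lemma iterate_in_edom: "x k \<in> edom g"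
  by (cases k) (simp_all add: x0 x_step prox_grad_in_edom)

lemma energy_decrease:
  "energy (Suc k) \<le> energy k - (L - (L + l) * \<beta>_max\<^sup>2) / 2 * (norm (x k - x (k - 1)))\<^sup>2"
proof -
  define d where "d = (norm (x k - x (k - 1)))\<^sup>2"
  have norm_xy: "(norm (x k - y k))\<^sup>2 = (\<beta> k)\<^sup>2 * d"
    using beta_bounds[of k] by (simp add: y_def d_def power_mult_distrib)
  have "objective (x (Suc k)) \<le> objective (x k) + (L + l) / 2 * ((\<beta> k)\<^sup>2 * d)
      - L / 2 * (norm (x (Suc k) - x k))\<^sup>2"
    using sufficient_decrease[OF iterate_in_edom, of "y k" k]
    by (simp only: x_step[symmetric] norm_xy norm_minus_commute[of "x k" "x (Suc k)"])
  moreover have "(\<beta> k)\<^sup>2 \<le> \<beta>_max\<^sup>2"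
    using beta_bounds[of k] by (intro power_mono) auto
  then have "(L + l) / 2 * ((\<beta> k)\<^sup>2 * d) \<le> (L + l) / 2 * (\<beta>_max\<^sup>2 * d)"
    using L_pos l_nonneg by (intro mult_left_mono mult_right_mono) (auto simp: d_def)
  moreover have "(L - (L + l) * \<beta>_max\<^sup>2) / 2 * d = L / 2 * d - (L + l) / 2 * (\<beta>_max\<^sup>2 * d)"
    by (simp add: field_simps)
  ultimately show ?thesis
    unfolding energy_def d_def[symmetric] diff_Suc_1 by linarith
qed

lemma summable_step_square: "summable (\<lambda>k. (norm (x (Suc k) - x k))\<^sup>2)"
proof -
  obtain xs where xs_min: "\<And>z. z \<in> edom g \<Longrightarrow> objective xs \<le> objective z"
    using objective_has_minimizer by blast
  have "objective xs \<le> energy k" for k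
    using xs_min[OF iterate_in_edom] L_pos unfolding energy_def by (simp add: add_increasing2)
  moreover have "\<beta>_max\<^sup>2 < L / (L + l)"
  proof -
    have "0 \<le> \<beta>_max"
      using beta_bounds[of 0] by linarith
    with beta_max_less have "\<beta>_max\<^sup>2 < (sqrt (L / (L + l)))\<^sup>2"
      by (intro power_strict_mono) auto
    with L_pos l_nonneg show ?thesis
      by simp
  qed
  then have "0 < (L - (L + l) * \<beta>_max\<^sup>2) / 2"
    using L_pos l_nonneg by (simp add: pos_less_divide_eq mult.commute)
  ultimately have "summable (\<lambda>k. (norm (x k - x (k - 1)))\<^sup>2)"
    by (intro summable_of_energy_decrease[where E = energy, OF energy_decrease]) auto
  then show ?thesis
    using summable_Suc_iff[of "\<lambda>k. (norm (x k - x (k - 1)))\<^sup>2"] by simp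
qed

lemma accumulation_point_stationary:
  assumes "strict_mono r" and lim: "(\<lambda>j. x (r j)) \<longlonglongrightarrow> xb"
  shows "Df2 xb - Df1 xb \<in> subdiff g xb"
proof (rule prox_grad_limit_stationary)
  have "(\<lambda>k. sqrt ((norm (x (Suc k) - x k))\<^sup>2)) \<longlonglongrightarrow> sqrt 0"
    by (intro tendsto_real_sqrt summable_LIMSEQ_zero summable_step_square)
  then have "(\<lambda>k. x (Suc k) - x k) \<longlonglongrightarrow> 0"
    by (simp add: tendsto_norm_zero_iff)
  then have step_lim: "(\<lambda>k. x k - x (k - 1)) \<longlonglongrightarrow> 0"
    using LIMSEQ_imp_Suc[of "\<lambda>k. x k - x (k - 1)"] by simp
  have "(\<lambda>j. \<beta> (r j) *\<^sub>R (x (r j) - x (r j - 1))) \<longlonglongrightarrow> 0"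
  proof (rule Lim_null_comparison[OF always_eventually])
    show "\<forall>j. norm (\<beta> (r j) *\<^sub>R (x (r j) - x (r j - 1))) \<le> \<beta>_max * norm (x (r j) - x (r j - 1))"
      using beta_bounds by (auto intro: mult_right_mono)
    show "(\<lambda>j. \<beta>_max * norm (x (r j) - x (r j - 1))) \<longlonglongrightarrow> 0"
      using LIMSEQ_subseq_LIMSEQ[OF step_lim \<open>strict_mono r\<close>]
      by (intro tendsto_mult_right_zero tendsto_norm_zero) (simp add: o_def)
  qed
  from tendsto_add[OF lim this] show "(\<lambda>j. y (r j)) \<longlonglongrightarrow> xb"
    by (simp add: y_def)
  have "(\<lambda>j. x (Suc (r j)) - x (r j)) \<longlonglongrightarrow> 0"
    using LIMSEQ_subseq_LIMSEQ[OF \<open>(\<lambda>k. x (Suc k) - x k) \<longlonglongrightarrow> 0\<close> \<open>strict_mono r\<close>]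
    by (simp add: o_def)
  from tendsto_add[OF lim this] show "(\<lambda>j. prox_grad (y (r j))) \<longlonglongrightarrow> xb"
    by (simp add: x_step[symmetric])
qed

end

theorem lemma3p4:
  fixes g :: "real^'n \<Rightarrow> ereal"
    and f1 f2 :: "real^'n \<Rightarrow> real"
    and Df1 Df2 :: "real^'n \<Rightarrow> real^'n"
    and L l :: real
    and \<beta> :: "nat \<Rightarrow> real"
    and x y :: "nat \<Rightarrow> real^'n"
  assumes g: "proper_fun g" "closed_fun g" "convex_fun g"
    and f1: "convex_on UNIV f1" "\<And>z. (f1 has_derivative (\<lambda>h. Df1 z \<bullet> h)) (at z)"
    and f2: "convex_on UNIV f2" "\<And>z. (f2 has_derivative (\<lambda>h. Df2 z \<bullet> h)) (at z)"
    and Lip1: "\<And>u v. norm (Df1 u - Df1 v) \<le> L * norm (u - v)"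
    and Lip2: "\<And>u v. norm (Df2 u - Df2 v) \<le> l * norm (u - v)"
    and L: "L > 0" "l \<ge> 0" "L \<ge> l"
    and attained: "\<exists>xs. \<forall>z. ereal (f1 xs - f2 xs) + g xs \<le> ereal (f1 z - f2 z) + g z"
    and inf_fin: "(INF z. ereal (f1 z - f2 z) + g z) > -\<infinity>"
    and x0: "g (x 0) \<noteq> \<infinity>"
    and beta: "\<And>k. 0 \<le> \<beta> k \<and> \<beta> k \<le> sqrt (L / (L + l))"
    and beta_sup: "(SUP k. \<beta> k) < sqrt (L / (L + l))"
    and y_def: "\<And>k. y k = x k + \<beta> k *\<^sub>R (x k - x (k - 1))"
    and x_step: "\<And>k. x (Suc k) = Prox (\<lambda>z. ereal (1 / L) * g z)
                                      (y k - (1 / L) *\<^sub>R (Df1 (y k) - Df2 (y k)))"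
  shows "summable (\<lambda>k. (norm (x (Suc k) - x k))\<^sup>2) \<and>
         (\<forall>xb r. strict_mono r \<and> (x \<circ> r) \<longlonglongrightarrow> xb \<longrightarrow>
           0 \<in> {Df1 xb - Df2 xb + v | v. v \<in> subdiff g xb})"
proof -
  interpret dc_composite g f1 f2 Df1 Df2 L l
    by unfold_locales (use g f1 f2 Lip1 Lip2 L attained in auto)
  have "\<beta> k \<le> (SUP k. \<beta> k)" for k
    using beta by (intro cSUP_upper bdd_aboveI2) auto
  then interpret inertial_prox_grad g f1 f2 Df1 Df2 L l \<beta> "SUP k. \<beta> k" x y
    by unfold_locales (use beta beta_sup y_def x0 in \<open>auto simp: edom_def x_step prox_grad_def\<close>)
  have "0 \<in> {Df1 xb - Df2 xb + v | v. v \<in> subdiff g xb}"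
    if "strict_mono r" "(x \<circ> r) \<longlonglongrightarrow> xb" for r xb
    using accumulation_point_stationary[of r xb] that
    by (force simp: o_def)
  then show ?thesis
    using summable_step_square by blast
qed

end
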